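(* Let $p$ be a prime, $e\geq 2$, $N=\langle\sigma\rangle$ cyclic of order $p^e$, and let $a$ be an integer with $a\equiv 1\pmod p$, and $u$ any integer. (a) If $p$ is odd, then the order of $[\sigma^u,\varphi_a]$ in $\mathrm{Hol}(N)$ is $\max\{p^{e-v_p(u)},|\varphi_a|\}$. (b) If $p=2$, then the order of $[\sigma^u,\varphi_a]$ is $\max\{2^{e-v_2(u)},|\varphi_a|\}$ if $a\equiv 1\pmod 4$, and $\max\{2^{e-v_2(u)-v_2(\frac{a+1}{2})},|\varphi_a|\}$ if $a\equiv 3\pmod 4$.
   Context: For an integer $a$ coprime to $p$, $\varphi_a\in\mathrm{Aut}(N)$ is $\sigma\mapsto\sigma^a$. Elements of $\mathrm{Hol}(N)=N\rtimes\mathrm{Aut}(N)$ are written $[\sigma^u,\varphi_a]$ with $[\sigma^u,\varphi_a][\sigma^v,\varphi_b]=[\sigma^{u+va},\varphi_{ab}]$. $v_p(m)$ is the $p$-adic valuation of $m$, with $v_p(0)=\infty$ (so that $p^{e-v_p(u)}$ is interpreted as $1$ when $\sigma^u=1$, i.e. exponents below $0$ give order $1$). *)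

theory Defs
  imports "HOL-Algebra.Algebra" "HOL-Library.Extended_Nat"
    "HOL-Computational_Algebra.Factorial_Ring" "HOL-Number_Theory.Cong"
begin

text \<open>The cyclic group N of order n, modelled as the integers 0..n-1 under addition mod n,
  written multiplicatively (generator sigma = 1, so sigma to the power u is u mod n).\<close>
definition CycN :: "nat \<Rightarrow> int monoid" where
  "CycN n = \<lparr>carrier = {0..<int n}, monoid.mult = (\<lambda>x y. (x + y) mod int n), one = 0\<rparr>"

definition phiA :: "nat \<Rightarrow> int \<Rightarrow> (int \<Rightarrow> int)" where
  "phiA n a = restrict (\<lambda>x. (a * x) mod int n) (carrier (CycN n))"

definition Hol :: "('a, 'b) monoid_scheme \<Rightarrow> ('a \<times> ('a \<Rightarrow> 'a)) monoid" where
  "Hol N = \<lparr>carrier = carrier N \<times> auto N,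
            monoid.mult = (\<lambda>(x, f) (y, g). (x \<otimes>\<^bsub>N\<^esub> f y, compose (carrier N) f g)),
            one = (\<one>\<^bsub>N\<^esub>, restrict id (carrier N))\<rparr>"

definition vp :: "nat \<Rightarrow> int \<Rightarrow> enat" where
  "vp p m = (if m = 0 then \<infinity> else enat (multiplicity (int p) m))"

end

theory Submission
  imports Defs
begin

text \<open>
  In the holomorph, [\<sigma>^u, \<phi>_a]^n = [\<sigma>^(u S(n)), \<phi>_(a^n)] with S(n) = 1 + a + ... + a^(n-1),
  so this power is trivial iff p^e divides u S(n) and |\<phi>_a| divides n. The order is therefore
  the lcm of |\<phi>_a| and of the least n with p^e | u S(n); as |\<phi>_a| is a power of p, this lcm
  is a maximum. If a = 1 modulo p (p odd) or modulo 4 (p = 2), lifting the exponent gives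
  v_p(S(n)) = v_p(n), so the least such n is p^(e - v_p(u)). If p = 2 and a = 3 modulo 4, then
  |\<phi>_a| is even, and S(2m) = (a + 1) (1 + a^2 + ... + a^(2(m-1))) with a^2 = 1 modulo 4
  reduces to the previous case.
\<close>

section \<open>Geometric sums and lifting the exponent\<close>

definition geom_sum :: "'a::comm_semiring_1 \<Rightarrow> nat \<Rightarrow> 'a" where
  "geom_sum b n = (\<Sum>i<n. b ^ i)"

lemma geom_sum_0 [simp]: "geom_sum b 0 = 0"
  by (simp add: geom_sum_def)

lemma geom_sum_Suc: "geom_sum b (Suc n) = geom_sum b n + b ^ n"
  by (simp add: geom_sum_def)

lemma geom_sum_2: "geom_sum b 2 = 1 + b"
  by (simp add: geom_sum_def numeral_2_eq_2)

lemma geom_sum_add: "geom_sum b (k + l) = geom_sum b k + b ^ k * geom_sum b l"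
  by (induction l) (simp_all add: geom_sum_Suc algebra_simps power_add)

lemma geom_sum_mult: "geom_sum b (q * m) = geom_sum b q * geom_sum (b ^ q) m"
proof (induction m)
  case 0
  then show ?case by simp
next
  case (Suc m)
  have "geom_sum b (q * Suc m) = geom_sum b (q * m) + b ^ (q * m) * geom_sum b q"
    using geom_sum_add[of b "q * m" q] by (simp add: add.commute)
  also have "\<dots> = geom_sum b q * geom_sum (b ^ q) (Suc m)"
    using Suc by (simp add: geom_sum_Suc algebra_simps flip: power_mult)
  finally show ?case .
qed

lemma power_minus_1_eq_geom_sum: "(b::'a::comm_ring_1) ^ n - 1 = (b - 1) * geom_sum b n"
  by (simp add: geom_sum_def power_diff_1_eq)

lemma cong_geom_sum_card:
  fixes b q :: int
  assumes "[b = 1] (mod q)"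
  shows "[geom_sum b n = int n] (mod q)"
proof -
  have "[geom_sum b n = (\<Sum>i<n. 1 ^ i)] (mod q)"
    unfolding geom_sum_def using assms by (intro cong_sum cong_pow)
  then show ?thesis by simp
qed

lemma power_cong_linear: "[(b::int) ^ i = 1 + int i * (b - 1)] (mod (b - 1)^2)"
proof (induction i)
  case 0
  then show ?case by simp
next
  case (Suc i)
  have "[b * b ^ i = b * (1 + int i * (b - 1))] (mod (b - 1)^2)"
    using Suc by (intro cong_mult) auto
  also have "b * (1 + int i * (b - 1)) = (1 + int (Suc i) * (b - 1)) + int i * (b - 1)^2"
    by (simp add: algebra_simps power2_eq_square)
  also have "[\<dots> = 1 + int (Suc i) * (b - 1)] (mod (b - 1)^2)"
    by (simp add: cong_iff_dvd_diff)
  finally show ?case by simp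
qed

lemma geom_sum_odd_cong:
  fixes b :: int
  assumes "odd p" and b: "[b = 1] (mod int p)"
  shows "[geom_sum b p = int p] (mod (int p)^2)"
proof -
  obtain h where p: "p = Suc (2 * h)"
    using assms(1) by (metis oddE Suc_eq_plus1)
  obtain t where t: "b - 1 = int p * t"
    using b by (auto simp: cong_iff_dvd_diff)
  have "(int p)^2 dvd (b - 1)^2"
    using t by simp
  moreover have "[geom_sum b p = (\<Sum>i<p. 1 + int i * (b - 1))] (mod (b - 1)^2)"
    unfolding geom_sum_def by (intro cong_sum power_cong_linear)
  ultimately have "[geom_sum b p = (\<Sum>i<p. 1 + int i * (b - 1))] (mod (int p)^2)"
    by (rule cong_dvd_modulus[rotated])
  also have "(\<Sum>i<p. 1 + int i * (b - 1)) = int p * (1 + int h * (b - 1))"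
    using double_arith_series[of 1 "b - 1" "2 * h"]
    by (simp add: p lessThan_Suc_atMost atLeast0AtMost algebra_simps)
  also have "[\<dots> = int p] (mod (int p)^2)"
    by (simp add: t cong_iff_dvd_diff power2_eq_square algebra_simps)
  finally show ?thesis .
qed

text \<open>The hypothesis of the lifting-the-exponent lemma for \<open>b\<^sup>n - 1\<close>.\<close>
definition lte_condition :: "nat \<Rightarrow> int \<Rightarrow> bool" where
  "lte_condition p b \<longleftrightarrow> (odd p \<and> [b = 1] (mod int p)) \<or> (p = 2 \<and> [b = 1] (mod 4))"

lemma lte_condition_cong: "lte_condition p b \<Longrightarrow> [b = 1] (mod int p)"
  unfolding lte_condition_def by (auto intro: cong_dvd_modulus[where m = 4])

lemma lte_condition_power: "lte_condition p b \<Longrightarrow> lte_condition p (b ^ k)"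
  unfolding lte_condition_def using cong_pow[of b 1 _ k] by auto

lemma geom_sum_prime_exact:
  assumes "Factorial_Ring.prime p" "lte_condition p b"
  obtains c where "geom_sum b p = int p * c" "\<not> int p dvd c"
proof (cases "odd p")
  case True
  then have "(int p)^2 dvd geom_sum b p - int p"
    using assms(2) geom_sum_odd_cong lte_condition_def by (auto simp: cong_iff_dvd_diff)
  then obtain t where "geom_sum b p - int p = (int p)^2 * t" ..
  then have "geom_sum b p = int p * (1 + int p * t)"
    by (simp add: algebra_simps power2_eq_square)
  moreover have "\<not> int p dvd 1 + int p * t"
    using prime_gt_1_nat[OF assms(1)] by (simp add: dvd_add_left_iff)
  ultimately show ?thesis by (rule that)
next
  case False
  then have p: "p = 2" and "[b = 1] (mod 4)"
    using assms(2) by (auto simp: lte_condition_def)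
  then obtain t where "b - 1 = 4 * t"
    by (auto simp: cong_iff_dvd_diff)
  then have "geom_sum b p = int p * (1 + 2 * t)" and "\<not> int p dvd 1 + 2 * t"
    by (simp_all add: p geom_sum_2)
  then show ?thesis by (rule that)
qed

lemma prime_dvd_geom_sum_iff:
  assumes "Factorial_Ring.prime p" "lte_condition p b"
  shows "int p dvd geom_sum b n \<longleftrightarrow> p dvd n"
  using cong_geom_sum_card[OF lte_condition_cong[OF assms(2)], of n]
  by (simp add: cong_dvd_iff)

lemma prime_power_dvd_geom_sum_iff:
  assumes "Factorial_Ring.prime p" "lte_condition p b"
  shows "(int p)^j dvd geom_sum b n \<longleftrightarrow> p^j dvd n"
  using assms(2)
proof (induction n arbitrary: b j rule: less_induct)
  case (less n)
  show ?case
  proof (cases j)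
    case 0
    then show ?thesis by simp
  next
    case (Suc k)
    show ?thesis
    proof (cases "p dvd n")
      case False
      then show ?thesis
        using prime_dvd_geom_sum_iff[OF assms(1) less.prems, of n] Suc
        by (metis dvd_mult_left power_Suc)
    next
      case True
      then obtain m where n: "n = p * m" ..
      show ?thesis
      proof (cases "m = 0")
        case True
        then show ?thesis using n by simp
      next
        case False
        have p0: "p > 0"
          using assms(1) prime_gt_0_nat by blast
        obtain c where c: "geom_sum b p = int p * c" "\<not> int p dvd c"
          using geom_sum_prime_exact[OF assms(1) less.prems] .
        have "geom_sum b n = int p * (c * geom_sum (b ^ p) m)"
          using n c by (simp add: geom_sum_mult)
        then have "(int p)^j dvd geom_sum b n \<longleftrightarrow> (int p)^k dvd c * geom_sum (b ^ p) m"
          using Suc p0 by simp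
        also have "\<dots> \<longleftrightarrow> (int p)^k dvd geom_sum (b ^ p) m"
          using c(2) assms(1) by (simp add: prime_imp_coprime coprime_dvd_mult_right_iff)
        also have "\<dots> \<longleftrightarrow> p^k dvd m"
          using n p0 False prime_gt_1_nat[OF assms(1)]
          by (intro less.IH lte_condition_power less.prems) simp
        also have "\<dots> \<longleftrightarrow> p^j dvd n"
          using Suc n p0 by simp
        finally show ?thesis .
      qed
    qed
  qed
qed

lemma coprime_prime_power_if_cong_1:
  "[a = 1] (mod int p) \<Longrightarrow> coprime a (int (p ^ e))"
  using cong_imp_coprime[of 1 a "int p"] by (simp add: cong_sym)

lemma power_prime_power_cong_1:
  assumes "[a = 1] (mod int p)"
  shows "(int p)^(k + 1) dvd a^(p^k) - 1"
proof (induction k)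
  case 0
  then show ?case using assms by (simp add: cong_iff_dvd_diff)
next
  case (Suc k)
  define b where "b = a^(p^k)"
  have "[b = 1] (mod int p)"
    unfolding b_def using cong_pow[OF assms] by simp
  then have "int p dvd geom_sum b p"
    using cong_geom_sum_card cong_dvd_iff by (metis dvd_refl)
  then have "(int p)^(k + 1) * int p dvd (b - 1) * geom_sum b p"
    using Suc unfolding b_def by (intro mult_dvd_mono)
  moreover have "a^(p^Suc k) - 1 = (b - 1) * geom_sum b p"
    unfolding b_def power_Suc2 power_mult by (rule power_minus_1_eq_geom_sum)
  ultimately show ?case by (simp add: mult.commute)
qed

lemma prime_power_dvd_mult_iff:
  assumes "Factorial_Ring.prime p" "u \<noteq> 0"
  shows "(int p)^e dvd u * y \<longleftrightarrow> (int p)^(e - multiplicity (int p) u) dvd y"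
proof (cases "y = 0")
  case False
  have "Factorial_Ring.prime (int p)"
    using assms(1) by (simp add: prime_nat_int_transfer)
  then have "prime_elem (int p)" "\<not> is_unit (int p)"
    by (auto simp: prime_imp_prime_elem not_prime_unit)
  then show ?thesis
    using assms(2) False
    by (simp add: power_dvd_iff_le_multiplicity prime_elem_multiplicity_mult_distrib) arith
qed simp

lemma prime_power_dvd_mult_geom_sum_iff:
  assumes "Factorial_Ring.prime p" "lte_condition p a"
  shows "(int p)^e dvd u * geom_sum a n \<longleftrightarrow> p ^ the_enat (enat e - vp p u) dvd n"
proof (cases "u = 0")
  case True
  then show ?thesis by (simp add: vp_def zero_enat_def)
next
  case False
  then show ?thesis
    by (simp add: vp_def prime_power_dvd_mult_iff[OF assms(1)]
        prime_power_dvd_geom_sum_iff[OF assms])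
qed

lemma two_power_diff_Suc_dvd_iff: "2 ^ (e - Suc w) dvd (m::nat) \<longleftrightarrow> 2 ^ (e - w) dvd 2 * m"
proof (cases "e \<le> w")
  case False
  then have "e - w = Suc (e - Suc w)"
    by simp
  then show ?thesis
    by simp
qed simp

lemma two_power_dvd_mult_geom_sum_even_iff:
  fixes a u :: int
  assumes a: "[a = 3] (mod 4)"
  shows "2 ^ e dvd u * geom_sum a (2 * m)
    \<longleftrightarrow> 2 ^ the_enat (enat e - vp 2 u - vp 2 ((a + 1) div 2)) dvd 2 * m"
proof -
  define c where "c = (a + 1) div 2"
  have "[a^2 = 3^2] (mod 4)"
    using a by (rule cong_pow)
  then have "[a^2 = 1] (mod 4)"
    by (simp add: cong_def)
  then have lte: "lte_condition 2 (a^2)"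
    by (simp add: lte_condition_def)
  have "a + 1 = 2 * c"
    using a unfolding c_def cong_def by presburger
  then have sum: "u * geom_sum a (2 * m) = (2 * u * c) * geom_sum (a^2) m"
    using geom_sum_mult[of a 2 m] by (simp add: geom_sum_2 add.commute)
  show ?thesis
  proof (cases "u = 0 \<or> c = 0")
    case True
    then have "enat e - vp 2 u - vp 2 c = 0"
      by (cases "vp 2 u") (auto simp: vp_def)
    then show ?thesis
      using True sum by (auto simp: c_def zero_enat_def)
  next
    case False
    define w where "w = multiplicity (2::int) u + multiplicity 2 c"
    have "multiplicity (2::int) (2 * u * c) = Suc w"
      using False unfolding w_def
      by (simp add: prime_elem_multiplicity_mult_distrib multiplicity_times_same)
    then have "2 ^ e dvd u * geom_sum a (2 * m) \<longleftrightarrow> 2 ^ (e - Suc w) dvd m"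
      using False prime_power_dvd_mult_iff[of 2 "2 * u * c" e "geom_sum (a^2) m"]
        prime_power_dvd_geom_sum_iff[of 2 "a^2" "e - Suc w" m] lte
      by (simp add: sum)
    also have "\<dots> \<longleftrightarrow> 2 ^ (e - w) dvd 2 * m"
      by (rule two_power_diff_Suc_dvd_iff)
    finally show ?thesis
      using False by (simp add: c_def w_def vp_def)
  qed
qed

lemma even_if_power_cong_1_mod_4:
  fixes a :: int
  assumes "[a = 3] (mod 4)" "[a ^ n = 1] (mod 4)"
  shows "even n"
proof (rule ccontr)
  assume "odd n"
  then obtain m where n: "n = Suc (2 * m)"
    using oddE by (metis Suc_eq_plus1)
  have "[(9::int) ^ m = 1 ^ m] (mod 4)"
    by (intro cong_pow) (simp add: cong_def)
  then have "[(3::int) ^ n = 3 * 1] (mod 4)"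
    unfolding n power_Suc power_mult by (intro cong_mult) simp_all
  moreover have "[a ^ n = 3 ^ n] (mod 4)"
    using assms(1) by (rule cong_pow)
  ultimately have "[(1::int) = 3] (mod 4)"
    using assms(2) by (metis cong_sym cong_trans mult_1_right)
  then show False
    by (simp add: cong_def)
qed

lemma lcm_power_eq_max:
  assumes "(p::nat) > 0"
  shows "lcm (p ^ k) (p ^ i) = max (p ^ k) (p ^ i)"
proof (cases "k \<le> i")
  case True
  then show ?thesis
    using assms by (simp add: lcm_proj2_if_dvd le_imp_power_dvd power_increasing max_absorb2)
next
  case False
  then show ?thesis
    using assms by (simp add: lcm_proj1_if_dvd le_imp_power_dvd power_increasing max_absorb1)
qed

section \<open>The holomorph\<close>

lemma AutoGroup_carrier: "carrier (AutoGroup G) = auto G"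
  by (simp add: AutoGroup_def BijGroup_def)

lemma AutoGroup_one: "\<one>\<^bsub>AutoGroup G\<^esub> = (\<lambda>x\<in>carrier G. x)"
  by (simp add: AutoGroup_def BijGroup_def)

lemma AutoGroup_mult:
  "f \<in> auto G \<Longrightarrow> g \<in> auto G \<Longrightarrow> f \<otimes>\<^bsub>AutoGroup G\<^esub> g = compose (carrier G) f g"
  by (simp add: AutoGroup_def BijGroup_def auto_def)

lemma Hol_carrier: "carrier (Hol N) = carrier N \<times> auto N"
  by (simp add: Hol_def)

lemma Hol_one: "\<one>\<^bsub>Hol N\<^esub> = (\<one>\<^bsub>N\<^esub>, \<lambda>x\<in>carrier N. x)"
  by (simp add: Hol_def id_def)

lemma Hol_mult: "(x, f) \<otimes>\<^bsub>Hol N\<^esub> (y, g) = (x \<otimes>\<^bsub>N\<^esub> f y, compose (carrier N) f g)"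
  by (simp add: Hol_def)

lemma auto_apply_closed: "f \<in> auto G \<Longrightarrow> x \<in> carrier G \<Longrightarrow> f x \<in> carrier G"
  unfolding auto_def by (blast intro: hom_in_carrier)

lemma (in group) compose_in_auto:
  assumes "f \<in> auto G" "g \<in> auto G"
  shows "compose (carrier G) f g \<in> auto G"
proof -
  interpret A: group "AutoGroup G"
    by (rule AutoGroup)
  show ?thesis
    using A.m_closed[of f g] assms by (simp add: AutoGroup_carrier AutoGroup_mult)
qed

lemma (in group) Hol_l_inv_ex:
  assumes "x \<in> carrier G" "f \<in> auto G"
  shows "\<exists>b\<in>carrier (Hol G). b \<otimes>\<^bsub>Hol G\<^esub> (x, f) = \<one>\<^bsub>Hol G\<^esub>"
proof -
  interpret A: group "AutoGroup G"
    by (rule AutoGroup)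
  define h where "h = inv\<^bsub>AutoGroup G\<^esub> f"
  have h: "h \<in> auto G"
    using A.inv_closed[of f] assms(2) by (simp add: h_def AutoGroup_carrier)
  interpret h: group_hom G G h
    using h by (simp add: group_hom_def group_hom_axioms_def is_group auto_def)
  have "h \<otimes>\<^bsub>AutoGroup G\<^esub> f = \<one>\<^bsub>AutoGroup G\<^esub>"
    unfolding h_def using assms(2) by (intro A.l_inv) (simp add: AutoGroup_carrier)
  then have "compose (carrier G) h f = (\<lambda>x\<in>carrier G. x)"
    by (simp add: AutoGroup_mult[OF h assms(2)] AutoGroup_one)
  moreover have "h (inv x) \<otimes> h x = \<one>"
    using assms(1) by (simp flip: h.hom_mult)
  ultimately have "(h (inv x), h) \<otimes>\<^bsub>Hol G\<^esub> (x, f) = \<one>\<^bsub>Hol G\<^esub>"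
    by (simp add: Hol_mult Hol_one)
  moreover have "(h (inv x), h) \<in> carrier (Hol G)"
    using assms(1) h by (simp add: Hol_carrier auto_apply_closed)
  ultimately show ?thesis
    by blast
qed

lemma (in group) group_Hol: "group (Hol G)"
proof (rule groupI)
  interpret A: group "AutoGroup G"
    by (rule AutoGroup)
  fix a b c
  assume "a \<in> carrier (Hol G)" "b \<in> carrier (Hol G)" "c \<in> carrier (Hol G)"
  then obtain x f y g z h where abc: "a = (x, f)" "b = (y, g)" "c = (z, h)"
    and in_G: "x \<in> carrier G" "y \<in> carrier G" "z \<in> carrier G"
    and in_auto: "f \<in> auto G" "g \<in> auto G" "h \<in> auto G"
    by (auto simp: Hol_carrier)
  have "compose (carrier G) (compose (carrier G) f g) h
      = compose (carrier G) f (compose (carrier G) g h)"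
    using A.m_assoc[of f g h] in_auto
    by (simp add: AutoGroup_carrier AutoGroup_mult compose_in_auto)
  moreover have "f (y \<otimes> g z) = f y \<otimes> f (g z)"
    using in_G in_auto by (simp add: auto_def hom_mult auto_apply_closed)
  ultimately show "a \<otimes>\<^bsub>Hol G\<^esub> b \<otimes>\<^bsub>Hol G\<^esub> c = a \<otimes>\<^bsub>Hol G\<^esub> (b \<otimes>\<^bsub>Hol G\<^esub> c)"
    using in_G in_auto by (simp add: abc Hol_mult compose_eq auto_apply_closed m_assoc)
next
  interpret A: group "AutoGroup G"
    by (rule AutoGroup)
  show "\<one>\<^bsub>Hol G\<^esub> \<in> carrier (Hol G)"
    using A.one_closed by (simp add: Hol_carrier Hol_one AutoGroup_carrier AutoGroup_one)
  fix a
  assume "a \<in> carrier (Hol G)"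
  then obtain x f where a: "a = (x, f)" "x \<in> carrier G" "f \<in> auto G"
    by (auto simp: Hol_carrier)
  have "compose (carrier G) (\<lambda>x\<in>carrier G. x) f = f"
    using A.l_one[of f] a(3) id_in_auto
    by (simp add: AutoGroup_carrier AutoGroup_one AutoGroup_mult)
  then show "\<one>\<^bsub>Hol G\<^esub> \<otimes>\<^bsub>Hol G\<^esub> a = a"
    using a by (simp add: Hol_one Hol_mult)
  show "\<exists>b\<in>carrier (Hol G). b \<otimes>\<^bsub>Hol G\<^esub> a = \<one>\<^bsub>Hol G\<^esub>"
    using a by (simp add: Hol_l_inv_ex)
qed (auto simp: Hol_carrier Hol_mult auto_apply_closed compose_in_auto)

section \<open>Elements of the holomorph of a cyclic group\<close>

lemma CycN_carrier [simp]: "carrier (CycN M) = {0..<int M}"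
  by (simp add: CycN_def)

lemma CycN_one [simp]: "\<one>\<^bsub>CycN M\<^esub> = 0"
  by (simp add: CycN_def)

lemma CycN_mult [simp]: "x \<otimes>\<^bsub>CycN M\<^esub> y = (x + y) mod int M"
  by (simp add: CycN_def)

lemma CycN_group: "M > 0 \<Longrightarrow> group (CycN M)"
proof (rule groupI)
  fix x y z
  show "x \<otimes>\<^bsub>CycN M\<^esub> y \<otimes>\<^bsub>CycN M\<^esub> z = x \<otimes>\<^bsub>CycN M\<^esub> (y \<otimes>\<^bsub>CycN M\<^esub> z)"
    by (simp add: CycN_def mod_add_left_eq mod_add_right_eq add.assoc)
next
  fix x
  assume "M > 0" "x \<in> carrier (CycN M)"
  then show "\<exists>y\<in>carrier (CycN M). y \<otimes>\<^bsub>CycN M\<^esub> x = \<one>\<^bsub>CycN M\<^esub>"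
    by (auto simp: CycN_def mod_add_left_eq intro!: bexI[of _ "(- x) mod int M"])
qed (auto simp: CycN_def)

lemma CycN_nat_pow: "(1::int) [^]\<^bsub>CycN M\<^esub> (n::nat) = int n mod int M"
proof (induction n)
  case 0
  then show ?case by simp
next
  case (Suc n)
  then show ?case
    by (simp add: mod_add_right_eq add.commute)
qed

lemma CycN_int_pow:
  assumes "M > 0"
  shows "(1::int) [^]\<^bsub>CycN M\<^esub> (u::int) = u mod int M"
proof (cases "u < 0")
  case True
  interpret group "CycN M"
    using assms by (rule CycN_group)
  have "inv\<^bsub>CycN M\<^esub> ((- u) mod int M) = u mod int M"
    using assms by (intro inv_equality) (simp_all add: mod_add_eq)
  then show ?thesis
    using True by (simp add: int_pow_def2 CycN_nat_pow)
qed (simp add: int_pow_def2 CycN_nat_pow)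

lemma phiA_apply: "x \<in> {0..<int M} \<Longrightarrow> phiA M b x = b * x mod int M"
  by (simp add: phiA_def)

lemma phiA_compose: "compose {0..<int M} (phiA M b) (phiA M c) = phiA M (b * c)"
proof
  fix x
  show "compose {0..<int M} (phiA M b) (phiA M c) x = phiA M (b * c) x"
  proof (cases "x \<in> {0..<int M}")
    case True
    then have "c * x mod int M \<in> {0..<int M}"
      by auto
    then show ?thesis
      using True by (simp add: compose_eq phiA_apply mod_mult_right_eq mult.assoc)
  qed (auto simp: compose_def phiA_def)
qed

lemma phiA_1: "phiA M 1 = (\<lambda>x\<in>{0..<int M}. x)"
  by (rule ext) (simp add: phiA_def)

lemma phiA_eq_id_iff:
  assumes "M > 1"
  shows "phiA M b = (\<lambda>x\<in>{0..<int M}. x) \<longleftrightarrow> [b = 1] (mod int M)"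
proof
  assume "phiA M b = (\<lambda>x\<in>{0..<int M}. x)"
  then have "phiA M b 1 = 1"
    using assms by simp
  then show "[b = 1] (mod int M)"
    using assms by (simp add: phiA_apply cong_def)
next
  assume "[b = 1] (mod int M)"
  then have "[b * x = 1 * x] (mod int M)" for x
    by (intro cong_mult) auto
  then show "phiA M b = (\<lambda>x\<in>{0..<int M}. x)"
    by (auto simp: phiA_def cong_def intro!: restrict_ext)
qed

lemma phiA_in_auto:
  assumes "M > 0" "coprime b (int M)"
  shows "phiA M b \<in> auto (CycN M)"
proof -
  have inj: "inj_on (phiA M b) {0..<int M}"
  proof (rule inj_onI)
    fix x y
    assume "x \<in> {0..<int M}" "y \<in> {0..<int M}" "phiA M b x = phiA M b y"
    then have "[b * x = b * y] (mod int M)"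
      by (simp add: phiA_apply cong_def)
    then have "[x = y] (mod int M)"
      using assms(2) cong_mult_lcancel by blast
    then show "x = y"
      using \<open>x \<in> _\<close> \<open>y \<in> _\<close> cong_less_imp_eq_int by auto
  qed
  have "phiA M b ` {0..<int M} \<subseteq> {0..<int M}"
    using assms(1) by (auto simp: phiA_apply)
  then have "bij_betw (phiA M b) {0..<int M} {0..<int M}"
    using endo_inj_surj[OF _ _ inj] inj by (simp add: bij_betw_def)
  moreover have "phiA M b \<in> hom (CycN M) (CycN M)"
    by (rule homI) (auto simp: phiA_apply mod_mult_right_eq mod_add_eq distrib_left)
  ultimately show ?thesis
    by (simp add: auto_def Bij_def phiA_def)
qed

lemma AutoGroup_phiA_pow:
  assumes "M > 0" "coprime a (int M)"
  shows "phiA M a [^]\<^bsub>AutoGroup (CycN M)\<^esub> (n::nat) = phiA M (a ^ n)"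
proof (induction n)
  case 0
  then show ?case
    by (simp add: AutoGroup_one phiA_1)
next
  case (Suc n)
  have "phiA M (a ^ n) \<in> auto (CycN M)" "phiA M a \<in> auto (CycN M)"
    using assms by (simp_all add: phiA_in_auto)
  then show ?case
    using Suc by (simp add: AutoGroup_mult phiA_compose mult.commute)
qed

lemma ord_phiA_dvd_iff:
  assumes "M > 1" "coprime a (int M)"
  shows "group.ord (AutoGroup (CycN M)) (phiA M a) dvd n \<longleftrightarrow> [a ^ n = 1] (mod int M)"
proof -
  have M: "M > 0"
    using assms(1) by simp
  interpret A: group "AutoGroup (CycN M)"
    using M by (intro group.AutoGroup CycN_group)
  show ?thesis
    using A.pow_eq_id[of "phiA M a" n] phiA_in_auto[OF M assms(2)] phiA_eq_id_iff[OF assms(1)]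
    by (simp add: AutoGroup_carrier AutoGroup_phiA_pow[OF M assms(2)] AutoGroup_one)
qed

lemma ord_phiA_prime_power:
  assumes "Factorial_Ring.prime p" "e > 0" "[a = 1] (mod int p)"
  obtains i where "group.ord (AutoGroup (CycN (p ^ e))) (phiA (p ^ e) a) = p ^ i"
proof -
  have M: "p ^ e > 1"
    using assms(1,2) by (intro one_less_power prime_gt_1_nat)
  have cop: "coprime a (int (p ^ e))"
    using assms(3) by (rule coprime_prime_power_if_cong_1)
  have "(int p)^e dvd (int p)^(e + 1)"
    by (simp add: le_imp_power_dvd)
  then have "[a ^ (p ^ e) = 1] (mod int (p ^ e))"
    using power_prime_power_cong_1[OF assms(3), of e] by (auto simp: cong_iff_dvd_diff intro: dvd_trans)
  then have "group.ord (AutoGroup (CycN (p ^ e))) (phiA (p ^ e) a) dvd p ^ e"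
    using ord_phiA_dvd_iff[OF M cop] by blast
  then show ?thesis
    using divides_primepow_nat[OF assms(1)] that by blast
qed

lemma Hol_phiA_pow:
  assumes "M > 0" "s \<in> {0..<int M}"
  shows "(s, phiA M a) [^]\<^bsub>Hol (CycN M)\<^esub> (n::nat) = (s * geom_sum a n mod int M, phiA M (a ^ n))"
proof (induction n)
  case 0
  then show ?case
    using assms by (simp add: Hol_one phiA_1 restrict_def)
next
  case (Suc n)
  have "s * geom_sum a (Suc n) = s * geom_sum a n + a ^ n * s"
    by (simp add: geom_sum_Suc algebra_simps)
  then show ?case
    using Suc assms
    by (simp add: Hol_mult phiA_apply phiA_compose mod_add_eq mult.commute)
qed

lemma Hol_phiA_pow_eq_one_iff:
  assumes "M > 1"
  shows "(u mod int M, phiA M a) [^]\<^bsub>Hol (CycN M)\<^esub> (n::nat) = \<one>\<^bsub>Hol (CycN M)\<^esub>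
    \<longleftrightarrow> int M dvd u * geom_sum a n \<and> [a ^ n = 1] (mod int M)"
  using assms Hol_phiA_pow[of M "u mod int M" a n] phiA_eq_id_iff[OF assms, of "a ^ n"]
  by (simp add: Hol_one dvd_eq_mod_eq_0 mod_mult_left_eq)

lemma ord_Hol_phiA:
  assumes "M > 1" "coprime a (int M)"
    and "\<And>n. group.ord (AutoGroup (CycN M)) (phiA M a) dvd n
      \<Longrightarrow> int M dvd u * geom_sum a n \<longleftrightarrow> d dvd n"
  shows "group.ord (Hol (CycN M)) (u mod int M, phiA M a)
    = lcm d (group.ord (AutoGroup (CycN M)) (phiA M a))"
proof -
  have M: "M > 0"
    using assms(1) by simp
  interpret H: group "Hol (CycN M)"
    using M by (intro group.group_Hol CycN_group)
  have "(u mod int M, phiA M a) \<in> carrier (Hol (CycN M))"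
    using M phiA_in_auto[OF M assms(2)] by (simp add: Hol_carrier)
  then show ?thesis
    using assms by (auto simp: H.ord_unique Hol_phiA_pow_eq_one_iff ord_phiA_dvd_iff)
qed

lemma ord_Hol_CycN_prime_power:
  assumes "Factorial_Ring.prime p" "e > 0" "[a = 1] (mod int p)"
    and "\<And>n. group.ord (AutoGroup (CycN (p ^ e))) (phiA (p ^ e) a) dvd n
      \<Longrightarrow> (int p)^e dvd u * geom_sum a n \<longleftrightarrow> p ^ k dvd n"
  shows "group.ord (Hol (CycN (p ^ e))) (1 [^]\<^bsub>CycN (p ^ e)\<^esub> u, phiA (p ^ e) a)
    = max (p ^ k) (group.ord (AutoGroup (CycN (p ^ e))) (phiA (p ^ e) a))"
proof -
  have M: "p ^ e > 1"
    using assms(1,2) by (intro one_less_power prime_gt_1_nat)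
  obtain i where "group.ord (AutoGroup (CycN (p ^ e))) (phiA (p ^ e) a) = p ^ i"
    using ord_phiA_prime_power[OF assms(1-3)] .
  moreover have "1 [^]\<^bsub>CycN (p ^ e)\<^esub> u = u mod int (p ^ e)"
    using M by (intro CycN_int_pow) linarith
  ultimately show ?thesis
    using ord_Hol_phiA[OF M coprime_prime_power_if_cong_1[OF assms(3)], of u "p ^ k"] assms(4)
      lcm_power_eq_max[OF prime_gt_0_nat[OF assms(1)]]
    by simp
qed

lemma even_if_ord_phiA_dvd:
  assumes "e \<ge> 2" "[a = 3] (mod 4)"
    and "group.ord (AutoGroup (CycN (2 ^ e))) (phiA (2 ^ e) a) dvd n"
  shows "even n"
proof -
  have "[a = 1] (mod int 2)"
    using assms(2) by (simp add: cong_def) presburger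
  moreover have "(2::nat) ^ e > 1"
    using assms(1) by (intro one_less_power) simp_all
  ultimately have "[a ^ n = 1] (mod 2 ^ e)"
    using ord_phiA_dvd_iff[of "2 ^ e" a n] assms(3) coprime_prime_power_if_cong_1[of a 2 e]
    by simp
  moreover have "(4::int) dvd 2 ^ e"
    using le_imp_power_dvd[OF assms(1), of "2::int"] by simp
  ultimately show ?thesis
    using even_if_power_cong_1_mod_4[OF assms(2)] cong_dvd_modulus by blast
qed

theorem lemma3p2:
  fixes p e :: nat and a u :: int
  defines "N \<equiv> CycN (p ^ e)"
  defines "\<sigma> \<equiv> (1::int)"
  assumes "Factorial_Ring.prime p" and "e \<ge> 2" and "[a = 1] (mod int p)"
  shows "(odd p \<longrightarrow>
           group.ord (Hol N) (\<sigma> [^]\<^bsub>N\<^esub> u, phiA (p ^ e) a)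
             = max (p ^ the_enat (enat e - vp p u)) (group.ord (AutoGroup N) (phiA (p ^ e) a)))
       \<and> (p = 2 \<longrightarrow> [a = 1] (mod 4) \<longrightarrow>
           group.ord (Hol N) (\<sigma> [^]\<^bsub>N\<^esub> u, phiA (p ^ e) a)
             = max (2 ^ the_enat (enat e - vp 2 u)) (group.ord (AutoGroup N) (phiA (p ^ e) a)))
       \<and> (p = 2 \<longrightarrow> [a = 3] (mod 4) \<longrightarrow>
           group.ord (Hol N) (\<sigma> [^]\<^bsub>N\<^esub> u, phiA (p ^ e) a)
             = max (2 ^ the_enat (enat e - vp 2 u - vp 2 ((a + 1) div 2)))
                   (group.ord (AutoGroup N) (phiA (p ^ e) a)))"
proof -
  note ord = ord_Hol_CycN_prime_power[where e = e and u = u,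
      OF \<open>Factorial_Ring.prime p\<close> _ \<open>[a = 1] (mod int p)\<close>, folded N_def \<sigma>_def]
  have "e > 0"
    using \<open>e \<ge> 2\<close> by simp
  have lte_case: "group.ord (Hol N) (\<sigma> [^]\<^bsub>N\<^esub> u, phiA (p ^ e) a)
      = max (p ^ the_enat (enat e - vp p u)) (group.ord (AutoGroup N) (phiA (p ^ e) a))"
    if "lte_condition p a"
    using \<open>e > 0\<close> prime_power_dvd_mult_geom_sum_iff[OF \<open>Factorial_Ring.prime p\<close> that]
    by (intro ord)
  have three_mod_four_case: "group.ord (Hol N) (\<sigma> [^]\<^bsub>N\<^esub> u, phiA (p ^ e) a)
      = max (p ^ the_enat (enat e - vp 2 u - vp 2 ((a + 1) div 2)))
            (group.ord (AutoGroup N) (phiA (p ^ e) a))"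
    if "p = 2" "[a = 3] (mod 4)"
  proof (rule ord[OF \<open>e > 0\<close>])
    fix n
    assume "group.ord (AutoGroup N) (phiA (p ^ e) a) dvd n"
    then have "even n"
      using even_if_ord_phiA_dvd[of e a n] \<open>e \<ge> 2\<close> that by (simp add: N_def)
    then obtain m where "n = 2 * m" ..
    then show "(int p)^e dvd u * geom_sum a n
        \<longleftrightarrow> p ^ the_enat (enat e - vp 2 u - vp 2 ((a + 1) div 2)) dvd n"
      using two_power_dvd_mult_geom_sum_even_iff[OF that(2)] that(1) by simp
  qed
  show ?thesis
    using lte_case three_mod_four_case \<open>[a = 1] (mod int p)\<close> by (auto simp: lte_condition_def)
qed

end
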